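(* Let $\Gamma$ be a weighted digraph with vertex set $\{1,\dots,n\}$, $n>1$, without loops and with strictly positive arc weights, let $L$ be its Laplacian matrix, $d$ its in-forest dimension, and $Q_k$ its matrices of in-forests with $k$ arcs. Then for every $\lambda\in\mathbb{C}$, $$\operatorname{adj}(\lambda I+L)=\sum_{k=0}^{n-d} Q_k\,\lambda^{\,n-k-1},$$ where $\lambda^0:=1$ (also for $\lambda=0$) and $\operatorname{adj}A$ denotes the transposed matrix of cofactors of $A$.
   Context: $W=(w_{ij})$ is the matrix of arc weights: $w_{ij}>0$ if there is an arc from $i$ to $j$, and $w_{ij}=0$ otherwise. The Laplacian matrix $L=(\ell_{ij})$ has $\ell_{ij}=-w_{ij}$ for $j\neq i$ and $\ell_{ii}=\sum_{k\neq i}w_{ik}$. The weight of a subgraph is the product of the weights of its arcs (1 if it has no arcs); the weight of a set of subgraphs is the sum of their weights (0 for the empty set). A converging tree is a weakly connected digraph in which one vertex (the root) has outdegree 0 and all others have outdegree 1. An in-forest of $\Gamma$ is a spanning subgraph of $\Gamma$ all of whose weak components are converging trees. The in-forest dimension $d$ is the minimum number of trees in an in-forest of $\Gamma$; the maximum number of arcs of an in-forest is $n-d$. For $k\ge0$, $Q_k=(q^k_{ij})$ is the $n\times n$ matrix where $q^k_{ij}$ is the total weight of the in-forests of $\Gamma$ with $k$ arcs in which $i$ belongs to a tree whose root is $j$; thus $Q_0=I$ and $Q_k=0$ for $k>n-d$. *)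

theory Defs
  imports "Jordan_Normal_Form.Determinant" "HOL-Library.Complex_Order" Complex_Main
begin

definition arcs :: "nat \<Rightarrow> (nat \<Rightarrow> nat \<Rightarrow> real) \<Rightarrow> (nat \<times> nat) set" where
  "arcs n w = {(i,j). i < n \<and> j < n \<and> w i j > 0}"

definition outdeg :: "(nat \<times> nat) set \<Rightarrow> nat \<Rightarrow> nat" where
  "outdeg A v = card {u. (v,u) \<in> A}"

definition wrel :: "nat \<Rightarrow> (nat \<times> nat) set \<Rightarrow> (nat \<times> nat) set" where
  "wrel n F = {(x,y). x < n \<and> y < n \<and> (x,y) \<in> (F \<union> F\<inverse>)\<^sup>*}"

definition converging_tree :: "nat set \<Rightarrow> (nat \<times> nat) set \<Rightarrow> bool" where
  "converging_tree V A \<longleftrightarrow> A \<subseteq> V \<times> V \<and> V \<noteq> {} \<and>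
     (\<forall>x\<in>V. \<forall>y\<in>V. (x,y) \<in> (A \<union> A\<inverse>)\<^sup>*) \<and>
     (\<exists>r\<in>V. outdeg A r = 0 \<and> (\<forall>v\<in>V. v \<noteq> r \<longrightarrow> outdeg A v = 1))"

definition in_forest :: "nat \<Rightarrow> (nat \<Rightarrow> nat \<Rightarrow> real) \<Rightarrow> (nat \<times> nat) set \<Rightarrow> bool" where
  "in_forest n w F \<longleftrightarrow> F \<subseteq> arcs n w \<and>
     (\<forall>C \<in> {0..<n} // wrel n F. converging_tree C (F \<inter> (C \<times> C)))"

definition num_trees :: "nat \<Rightarrow> (nat \<times> nat) set \<Rightarrow> nat" where
  "num_trees n F = card ({0..<n} // wrel n F)"

definition in_forest_dim :: "nat \<Rightarrow> (nat \<Rightarrow> nat \<Rightarrow> real) \<Rightarrow> nat" where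
  "in_forest_dim n w = Min {num_trees n F | F. in_forest n w F}"

definition weight :: "(nat \<Rightarrow> nat \<Rightarrow> real) \<Rightarrow> (nat \<times> nat) set \<Rightarrow> real" where
  "weight w F = (\<Prod>(i,j)\<in>F. w i j)"

(* entry (i,j) of Q_k: total weight of in-forests with k arcs in which i belongs to a tree rooted at j *)
definition Qent :: "nat \<Rightarrow> (nat \<Rightarrow> nat \<Rightarrow> real) \<Rightarrow> nat \<Rightarrow> nat \<Rightarrow> nat \<Rightarrow> real" where
  "Qent n w k i j = (\<Sum>F \<in> {F. in_forest n w F \<and> card F = k \<and> (i,j) \<in> wrel n F \<and> outdeg F j = 0}. weight w F)"

definition Qmat :: "nat \<Rightarrow> (nat \<Rightarrow> nat \<Rightarrow> real) \<Rightarrow> nat \<Rightarrow> real mat" where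
  "Qmat n w k = mat n n (\<lambda>(i,j). Qent n w k i j)"

definition laplacian :: "nat \<Rightarrow> (nat \<Rightarrow> nat \<Rightarrow> real) \<Rightarrow> real mat" where
  "laplacian n w = mat n n (\<lambda>(i,j). if i = j then (\<Sum>k\<in>{0..<n} - {i}. w i k) else - w i j)"

end

theory Submission
  imports Defs "HOL-Combinatorics.Orbits"
begin

(*
  Entry (i,j) of adj (lam I + L) is the cofactor obtained by replacing row j by the unit vector
  e_i. Every other row k equals lam e_k + (sum over m ~= k of w k m (e_k - e_m)), so
  multilinearity expands the determinant over maps f with f j = j: the term of f is
  lam^(#fixed points - 1) times the weights w k (f k) of the moved points, times the determinant
  of the matrix with rows e_k - e_(f k) and row j = e_i. That determinant is 1 if iterating f
  leads every vertex to a fixed point and leads i to j, and 0 otherwise (two equal rows if i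
  ends elsewhere, a null vector supported on a cycle of f otherwise). The maps that contribute
  are exactly the in-forests {k -> f k} in which i lies in the tree rooted at j, and grouping
  them by their number k of arcs produces the coefficient of lam^(n - k - 1).
*)

section \<open>Expanding a determinant row by row\<close>

lemma det_mat_sum_rows:
  fixes a :: "nat \<Rightarrow> nat \<Rightarrow> 'a::comm_ring_1" and v :: "nat \<Rightarrow> nat \<Rightarrow> nat \<Rightarrow> 'a"
  assumes "\<And>k. finite (S k)"
  shows "det (mat n n (\<lambda>(k,c). \<Sum>m\<in>S k. a k m * v k m c)) =
    (\<Sum>f\<in>PiE {0..<n} S. (\<Prod>k<n. a k (f k)) * det (mat n n (\<lambda>(k,c). v k (f k) c)))"
proof -
  let ?perms = "{p. p permutes {0..<n}}"
  have det_eq: "det (mat n n (\<lambda>(k,c). g k c)) = (\<Sum>p\<in>?perms. signof p * (\<Prod>k<n. g k (p k)))"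
    for g :: "nat \<Rightarrow> nat \<Rightarrow> 'a"
    by (subst det_def'[of _ n]) (auto intro!: sum.cong prod.cong simp: permutes_def atLeast0LessThan)
  have "det (mat n n (\<lambda>(k,c). \<Sum>m\<in>S k. a k m * v k m c)) =
     (\<Sum>p\<in>?perms. signof p *
        (\<Sum>f\<in>PiE {0..<n} S. (\<Prod>k<n. a k (f k)) * (\<Prod>k<n. v k (f k) (p k))))"
    unfolding det_eq by (subst prod_sum_PiE) (auto simp: assms prod.distrib atLeast0LessThan)
  also have "\<dots> = (\<Sum>f\<in>PiE {0..<n} S. (\<Prod>k<n. a k (f k)) *
      (\<Sum>p\<in>?perms. signof p * (\<Prod>k<n. v k (f k) (p k))))"
    unfolding sum_distrib_left by (subst sum.swap) (simp add: mult_ac)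
  finally show ?thesis
    unfolding det_eq .
qed

lemma cofactor_eq_det_replace_row:
  assumes M: "(M :: 'a::comm_ring_1 mat) \<in> carrier_mat n n" and "i < n" "j < n"
  shows "cofactor M j i = det (mat n n (\<lambda>(k,c). if k = j then of_bool (c = i) else M $$ (k,c)))"
proof -
  define A where "A = mat n n (\<lambda>(k,c). if k = j then of_bool (c = i) else M $$ (k,c))"
  have A: "A \<in> carrier_mat n n"
    unfolding A_def by simp
  have "mat_delete A j i = mat_delete M j i"
    using M by (intro eq_matI) (auto simp: mat_delete_def A_def)
  then have "cofactor M j i = cofactor A j i"
    unfolding cofactor_def by simp
  also have "\<dots> = (\<Sum>c<n. A $$ (j,c) * cofactor A j c)"
    using \<open>i < n\<close> \<open>j < n\<close> by (simp add: A_def)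
  also have "\<dots> = det A"
    by (rule laplace_expansion_row[OF A \<open>j < n\<close>, symmetric])
  finally show ?thesis
    unfolding A_def .
qed

section \<open>Maps whose iterates end in a fixed point\<close>

definition reaches :: "('a \<Rightarrow> 'a) \<Rightarrow> 'a \<Rightarrow> 'a \<Rightarrow> bool" where
  "reaches f x r \<longleftrightarrow> f r = r \<and> (\<exists>t. (f^^t) x = r)"

definition rooted :: "nat \<Rightarrow> (nat \<Rightarrow> nat) \<Rightarrow> bool" where
  "rooted n f \<longleftrightarrow> (\<forall>x<n. \<exists>r. reaches f x r)"

definition root_of :: "('a \<Rightarrow> 'a) \<Rightarrow> 'a \<Rightarrow> 'a" where
  "root_of f x = (THE r. reaches f x r)"

lemma funpow_fixpoint: "f r = r \<Longrightarrow> (f^^t) r = r"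
  by (induction t) auto

lemma reaches_self: "f r = r \<Longrightarrow> reaches f r r"
  unfolding reaches_def by (intro conjI exI[of _ 0]) simp_all

lemma reaches_unique:
  assumes "reaches f x r" "reaches f x r'"
  shows "r = r'"
proof -
  have later: "(f^^t') x = r" if "(f^^t) x = r" "f r = r" "t \<le> t'" for r t t'
  proof -
    have "(f^^t') x = (f^^(t' - t)) ((f^^t) x)"
      using \<open>t \<le> t'\<close> by (metis funpow_add le_add_diff_inverse2 o_apply)
    then show ?thesis
      using that funpow_fixpoint[of f r] by simp
  qed
  obtain t t' where "(f^^t) x = r" "(f^^t') x = r'" "f r = r" "f r' = r'"
    using assms unfolding reaches_def by blast
  then show ?thesis
    using later[of t r t'] later[of t' r' t] by (cases "t \<le> t'") auto
qed

lemma root_of_eq: "reaches f x r \<Longrightarrow> root_of f x = r"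
  unfolding root_of_def by (rule the_equality) (auto intro: reaches_unique)

lemma reaches_step_iff: "reaches f (f x) r \<longleftrightarrow> reaches f x r"
proof
  assume "reaches f (f x) r"
  then obtain t where "(f^^t) (f x) = r" "f r = r"
    unfolding reaches_def by blast
  then have "(f^^Suc t) x = r" "f r = r"
    by (simp_all add: funpow_Suc_right del: funpow.simps)
  then show "reaches f x r"
    unfolding reaches_def by blast
next
  assume "reaches f x r"
  then obtain t where t: "(f^^t) x = r" "f r = r"
    unfolding reaches_def by blast
  have "(f^^(t - 1)) (f x) = r"
  proof (cases t)
    case 0
    then show ?thesis
      using t by simp
  next
    case (Suc s)
    then show ?thesis
      using t by (simp add: funpow_Suc_right del: funpow.simps)
  qed
  then show "reaches f (f x) r"
    using t unfolding reaches_def by blast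
qed

lemma reaches_fun_upd_fixpoint:
  assumes "reaches f x r"
  shows "\<exists>r'. reaches (f(k := k)) x r'"
proof -
  obtain t where "(f^^t) x = r" "f r = r"
    using assms unfolding reaches_def by blast
  then show ?thesis
  proof (induction t arbitrary: x)
    case 0
    then have "(f(k := k)) x = x"
      by simp
    then show ?case
      by (blast intro: reaches_self)
  next
    case (Suc t)
    show ?case
    proof (cases "x = k")
      case True
      then have "(f(k := k)) x = x"
        by simp
      then show ?thesis
        by (blast intro: reaches_self)
    next
      case False
      have "(f^^t) (f x) = r"
        using Suc.prems by (simp add: funpow_Suc_right del: funpow.simps)
      then obtain r' where "reaches (f(k := k)) (f x) r'"
        using Suc.IH Suc.prems by blast
      then have "reaches (f(k := k)) ((f(k := k)) x) r'"
        using False by simp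
      then show ?thesis
        unfolding reaches_step_iff by blast
    qed
  qed
qed

lemma rooted_fun_upd_fixpoint: "rooted n f \<Longrightarrow> rooted n (f(k := k))"
  unfolding rooted_def by (metis reaches_fun_upd_fixpoint)

lemma funpow_closed: "\<forall>k<n. f k < n \<Longrightarrow> x < n \<Longrightarrow> (f^^t) x < n"
  by (induction t) auto

lemma
  assumes "rooted n f" "\<forall>k<n. f k < n" "x < n"
  shows reaches_root_of: "reaches f x (root_of f x)"
    and root_of_less: "root_of f x < n"
    and root_of_fixpoint: "f (root_of f x) = root_of f x"
    and root_of_step: "root_of f (f x) = root_of f x"
proof -
  obtain r where "reaches f x r"
    using assms(1,3) unfolding rooted_def by blast
  then show reach: "reaches f x (root_of f x)"
    by (simp only: root_of_eq)
  then show "f (root_of f x) = root_of f x"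
    unfolding reaches_def by blast
  obtain t where "(f^^t) x = root_of f x"
    using reach unfolding reaches_def by blast
  then show "root_of f x < n"
    using funpow_closed[OF assms(2,3), of t] by simp
  show "root_of f (f x) = root_of f x"
    using reach by (intro root_of_eq) (simp only: reaches_step_iff)
qed

lemma root_of_self: "f r = r \<Longrightarrow> root_of f r = r"
  by (intro root_of_eq reaches_self)

lemma reaches_last_arc:
  assumes "reaches f x r" "f x \<noteq> x"
  shows "\<exists>s. f ((f^^s) x) \<noteq> (f^^s) x \<and> f (f ((f^^s) x)) = f ((f^^s) x)"
proof -
  obtain t where "(f^^t) x = r" "f r = r"
    using assms(1) unfolding reaches_def by blast
  then show ?thesis
    using assms(2)
  proof (induction t arbitrary: x)
    case 0
    then show ?case
      by simp
  next
    case (Suc t)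
    show ?case
    proof (cases "f (f x) = f x")
      case True
      then show ?thesis
        using Suc.prems(3) funpow_0 by metis
    next
      case False
      have "(f^^t) (f x) = r"
        using Suc.prems(1) by (simp add: funpow_Suc_right del: funpow.simps)
      then obtain s where "f ((f^^s) (f x)) \<noteq> (f^^s) (f x)" "f (f ((f^^s) (f x))) = f ((f^^s) (f x))"
        using Suc.IH Suc.prems(2) False by blast
      then show ?thesis
        by (metis funpow_Suc_right o_apply)
    qed
  qed
qed

section \<open>Determinants of pointer matrices\<close>

definition pointer_mat :: "nat \<Rightarrow> (nat \<Rightarrow> nat) \<Rightarrow> nat \<Rightarrow> nat \<Rightarrow> 'a::comm_ring_1 mat" where
  "pointer_mat n f j x = mat n n (\<lambda>(k,c).
     if k = j then of_bool (c = x) else of_bool (c = k) - of_bool (f k \<noteq> k \<and> c = f k))"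

lemma det_pointer_mat_self:
  assumes "rooted n f" "\<forall>k<n. f k < n" "f j = j"
  shows "det (pointer_mat n f j j :: 'a::comm_ring_1 mat) = 1"
proof -
  define m where "m = card {k. k < n \<and> f k \<noteq> k}"
  then show ?thesis
    using assms
  proof (induction m arbitrary: f)
    case 0
    then have "\<forall>k<n. f k = k"
      by auto
    then have "pointer_mat n f j j = (1\<^sub>m n :: 'a mat)"
      unfolding pointer_mat_def by (auto intro!: eq_matI)
    then show ?case
      by simp
  next
    case (Suc m)
    have "{k. k < n \<and> f k \<noteq> k} \<noteq> {}"
      using Suc.prems(1) by (intro notI) simp
    then obtain x where x: "x < n" "f x \<noteq> x"
      by blast
    then obtain r where "reaches f x r"
      using Suc.prems unfolding rooted_def by blast
    from reaches_last_arc[OF this x(2)]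
    obtain s where s: "f ((f^^s) x) \<noteq> (f^^s) x" "f (f ((f^^s) x)) = f ((f^^s) x)"
      by blast
    define k where "k = (f^^s) x"
    have "k < n"
      unfolding k_def using funpow_closed[OF Suc.prems(3) x(1)] .
    moreover have "f k \<noteq> k" "f (f k) = f k"
      using s unfolding k_def by simp_all
    ultimately have k: "k < n" "f k < n" "f k \<noteq> k" "f (f k) = f k" "k \<noteq> j"
      using Suc.prems(3,4) by auto
    define g where "g = f(k := k)"
    have "{k. k < n \<and> g k \<noteq> k} = {k. k < n \<and> f k \<noteq> k} - {k}"
      unfolding g_def by auto
    then have "m = card {k. k < n \<and> g k \<noteq> k}"
      using Suc.prems(1) k by simp
    moreover have "rooted n g"
      unfolding g_def by (rule rooted_fun_upd_fixpoint[OF Suc.prems(2)])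
    moreover have "\<forall>k<n. g k < n" "g j = j"
      using Suc.prems(3,4) k unfolding g_def by auto
    ultimately have IH: "det (pointer_mat n g j j :: 'a mat) = 1"
      using Suc.IH by blast
    (* Row f k is e_(f k) for both maps, so detaching the arc k -> f k is a row operation. *)
    have "pointer_mat n f j j = addrow (-1) k (f k) (pointer_mat n g j j :: 'a mat)"
      using k unfolding pointer_mat_def mat_addrow_def g_def by (auto intro!: eq_matI)
    also have "det \<dots> = det (pointer_mat n g j j :: 'a mat)"
      using k by (intro det_addrow) (auto simp: pointer_mat_def)
    finally show ?case
      using IH by simp
  qed
qed

lemma det_pointer_mat_step:
  assumes "f j = j" "j < n" "x < n" "f x < n"
  shows "det (pointer_mat n f j (f x) :: 'a::comm_ring_1 mat) = det (pointer_mat n f j x)"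
proof (cases "f x = x")
  case False
  then have "x \<noteq> j"
    using assms(1) by auto
  then have "pointer_mat n f j x = addrow 1 j x (pointer_mat n f j (f x) :: 'a mat)"
    using False assms unfolding pointer_mat_def mat_addrow_def by (auto intro!: eq_matI)
  also have "det \<dots> = det (pointer_mat n f j (f x) :: 'a mat)"
    using \<open>x \<noteq> j\<close> assms by (intro det_addrow) (auto simp: pointer_mat_def)
  finally show ?thesis
    by simp
qed simp

lemma det_pointer_mat_funpow:
  assumes "f j = j" "j < n" "x < n" "\<forall>k<n. f k < n"
  shows "det (pointer_mat n f j ((f^^t) x) :: 'a::comm_ring_1 mat) = det (pointer_mat n f j x)"
proof (induction t)
  case (Suc t)
  have "(f^^t) x < n"
    using funpow_closed[OF assms(4,3)] .
  then have "det (pointer_mat n f j ((f^^Suc t) x) :: 'a mat) = det (pointer_mat n f j ((f^^t) x))"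
    using det_pointer_mat_step[of f j n "(f^^t) x"] assms by simp
  then show ?case
    using Suc.IH by simp
qed simp

lemma funpow_eventually_periodic:
  fixes f :: "nat \<Rightarrow> nat"
  assumes "\<forall>k<n. f k < n" "y < n"
  shows "\<exists>a p. 0 < p \<and> (f^^p) ((f^^a) y) = (f^^a) y"
proof -
  have "\<not> inj_on (\<lambda>t. (f^^t) y) {..n}"
  proof
    assume "inj_on (\<lambda>t. (f^^t) y) {..n}"
    then have "card ((\<lambda>t. (f^^t) y) ` {..n}) = Suc n"
      by (simp add: card_image)
    moreover have "(\<lambda>t. (f^^t) y) ` {..n} \<subseteq> {..<n}"
      using funpow_closed[OF assms] by auto
    then have "card ((\<lambda>t. (f^^t) y) ` {..n}) \<le> n"
      using card_mono[of "{..<n}"] by fastforce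
    ultimately show False
      by simp
  qed
  then obtain a b where "a \<noteq> b" "(f^^a) y = (f^^b) y"
    unfolding inj_on_def by blast
  then have ab: "min a b < max a b" "(f^^min a b) y = (f^^max a b) y"
    by (auto simp: min_def max_def)
  have "(f^^(max a b - min a b)) ((f^^min a b) y) = (f^^max a b) y"
    using ab(1) funpow_add[of "max a b - min a b" "min a b" f] by simp
  then show ?thesis
    using ab by (intro exI[of _ "min a b"] exI[of _ "max a b - min a b"]) simp
qed

lemma det_pointer_mat_not_rooted:
  assumes "\<forall>k<n. f k < n" "f j = j" "\<not> rooted n f"
  shows "det (pointer_mat n f j x :: 'a::idom mat) = 0"
proof -
  obtain y where y: "y < n" "\<And>r. \<not> reaches f y r"
    using assms(3) unfolding rooted_def by blast
  from funpow_eventually_periodic[OF assms(1) y(1)]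
  obtain a p where p: "0 < p" "(f^^p) ((f^^a) y) = (f^^a) y"
    by blast
  define z where "z = (f^^a) y"
  define D where "D = orbit f z"
  have "z \<in> D"
    using p unfolding D_def orbit_altdef z_def by force
  then have finD: "finite D" and imD: "f ` D = D"
    unfolding D_def using orbit_inverse[of z f f f] by (simp_all add: finite_orbit self_in_orbit_step)
  then have injD: "inj_on f D"
    by (simp add: eq_card_imp_inj_on)
  have D: "u < n" "f u \<noteq> u" if uD: "u \<in> D" for u
  proof -
    obtain m where "u = (f^^m) z"
      using uD unfolding D_def orbit_altdef by blast
    then have u: "(f^^(m + a)) y = u"
      unfolding z_def by (simp add: funpow_add)
    then show "u < n"
      using funpow_closed[OF assms(1) y(1), of "m + a"] by simp
    show "f u \<noteq> u"
    proof
      assume "f u = u"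
      with u have "reaches f y u"
        unfolding reaches_def by (intro conjI exI[of _ "m + a"])
      then show False
        using y(2) by blast
    qed
  qed
  have "j \<notin> D"
    using D(2) assms(2) by blast
  (* The indicator of the cycle D is a left null vector, as f permutes D and j is not in D. *)
  define v :: "'a vec" where "v = vec n (\<lambda>u. of_bool (u \<in> D))"
  define P :: "'a mat" where "P = pointer_mat n f j x"
  have P: "P \<in> carrier_mat n n"
    unfolding P_def pointer_mat_def by simp
  have "transpose_mat P *\<^sub>v v = 0\<^sub>v n"
  proof (rule eq_vecI)
    fix c
    assume "c < dim_vec (0\<^sub>v n :: 'a vec)"
    then have c: "c < n"
      by simp
    have "(transpose_mat P *\<^sub>v v) $ c = (\<Sum>u<n. P $$ (u,c) * of_bool (u \<in> D))"
      using c P by (simp add: v_def scalar_prod_def atLeast0LessThan)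
    also have "\<dots> = (\<Sum>u\<in>{..<n} \<inter> D. P $$ (u,c))"
      by (simp add: sum.inter_restrict of_bool_def if_distrib[of "times _"] cong: if_cong)
    also have "{..<n} \<inter> D = D"
      using D(1) by blast
    also have "(\<Sum>u\<in>D. P $$ (u,c)) = (\<Sum>u\<in>D. of_bool (c = u) - of_bool (c = f u))"
      using D \<open>j \<notin> D\<close> c by (intro sum.cong) (auto simp: P_def pointer_mat_def)
    also have "\<dots> = (\<Sum>u\<in>D. of_bool (c = u)) - (\<Sum>u\<in>f ` D. of_bool (c = u))"
      by (simp add: sum_subtractf sum.reindex[OF injD])
    also have "\<dots> = 0"
      unfolding imD by simp
    finally show "(transpose_mat P *\<^sub>v v) $ c = 0\<^sub>v n $ c"
      using c by simp
  qed (use P in simp)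
  moreover have "v $ z \<noteq> 0\<^sub>v n $ z"
    using \<open>z \<in> D\<close> D(1)[OF \<open>z \<in> D\<close>] unfolding v_def by simp
  then have "v \<noteq> 0\<^sub>v n"
    by auto
  moreover have "v \<in> carrier_vec n"
    unfolding v_def by simp
  ultimately have "det (transpose_mat P) = 0"
    using det_0_iff_vec_prod_zero[of "transpose_mat P" n] P by auto
  then show ?thesis
    using det_transpose[OF P] unfolding P_def by simp
qed

lemma det_pointer_mat:
  assumes "\<forall>k<n. f k < n" "f j = j" "j < n" "x < n"
  shows "det (pointer_mat n f j x :: 'a::idom mat) = of_bool (rooted n f \<and> root_of f x = j)"
proof (cases "rooted n f")
  case False
  then show ?thesis
    using det_pointer_mat_not_rooted[OF assms(1,2) False] by simp
next
  case True
  define r where "r = root_of f x"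
  have r: "r < n" "f r = r"
    unfolding r_def using root_of_less[OF True assms(1,4)] root_of_fixpoint[OF True assms(1,4)] by simp_all
  obtain t where t: "(f^^t) x = r"
    using reaches_root_of[OF True assms(1,4)] unfolding reaches_def r_def by blast
  have "det (pointer_mat n f j ((f^^t) x) :: 'a mat) = det (pointer_mat n f j x)"
    by (rule det_pointer_mat_funpow[OF assms(2,3,4,1)])
  then have det_r: "det (pointer_mat n f j x :: 'a mat) = det (pointer_mat n f j r)"
    unfolding t by simp
  show ?thesis
  proof (cases "r = j")
    case True
    then show ?thesis
      using det_r det_pointer_mat_self[OF \<open>rooted n f\<close> assms(1,2)] r_def \<open>rooted n f\<close> by simp
  next
    case False
    have "det (pointer_mat n f j r :: 'a mat) = 0"
      using False r assms(3) by (intro det_identical_rows[of _ n j r]) (auto simp: pointer_mat_def)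
    then show ?thesis
      using det_r False r_def by simp
  qed
qed

section \<open>Rooted maps and in-forests\<close>

definition map_arcs :: "nat \<Rightarrow> (nat \<Rightarrow> nat) \<Rightarrow> (nat \<times> nat) set" where
  "map_arcs n f = {(k, f k) | k. k < n \<and> f k \<noteq> k}"

lemma mem_map_arcs: "(x, y) \<in> map_arcs n f \<longleftrightarrow> x < n \<and> f x \<noteq> x \<and> y = f x"
  unfolding map_arcs_def by auto

lemma map_arcs_path_funpow:
  assumes "C \<subseteq> {..<n}" "\<forall>y\<in>C. f y \<in> C" "x \<in> C"
  shows "(f^^t) x \<in> C \<and> (x, (f^^t) x) \<in> (map_arcs n f \<inter> C \<times> C)\<^sup>*"
proof (induction t)
  case (Suc t)
  let ?y = "(f^^t) x"
  have "(?y, f ?y) \<in> (map_arcs n f \<inter> C \<times> C)\<^sup>="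
    using Suc assms(1,2) by (auto simp: mem_map_arcs)
  then show ?case
    using Suc assms(2) by (auto intro: rtrancl_into_rtrancl)
qed (use assms(3) in simp)

lemma rtrancl_symcl_join:
  assumes "(a, c) \<in> A\<^sup>*" "(b, c) \<in> A\<^sup>*"
  shows "(a, b) \<in> (A \<union> A\<inverse>)\<^sup>*"
proof -
  have "(c, b) \<in> (A\<inverse>)\<^sup>*"
    using assms(2) by (simp add: rtrancl_converseI)
  then have "(c, b) \<in> (A \<union> A\<inverse>)\<^sup>*"
    using rtrancl_mono[of "A\<inverse>" "A \<union> A\<inverse>"] by blast
  moreover have "(a, c) \<in> (A \<union> A\<inverse>)\<^sup>*"
    using assms(1) rtrancl_mono[of A "A \<union> A\<inverse>"] by blast
  ultimately show ?thesis
    by (rule rtrancl_trans[rotated])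
qed

lemma root_class_connected:
  assumes "rooted n f" "\<forall>k<n. f k < n"
    and C: "C = {y. y < n \<and> root_of f y = \<rho>}" and "a \<in> C" "b \<in> C"
  shows "(a, b) \<in> ((map_arcs n f \<inter> C \<times> C) \<union> (map_arcs n f \<inter> C \<times> C)\<inverse>)\<^sup>*"
proof -
  have closed: "C \<subseteq> {..<n}" "\<forall>y\<in>C. f y \<in> C"
    using assms(2) root_of_step[OF assms(1,2)] unfolding C by auto
  have "(x, \<rho>) \<in> (map_arcs n f \<inter> C \<times> C)\<^sup>*" if "x \<in> C" for x
  proof -
    obtain t where "(f^^t) x = \<rho>"
      using reaches_root_of[OF assms(1,2)] \<open>x \<in> C\<close> unfolding C reaches_def by blast
    then show ?thesis
      using map_arcs_path_funpow[OF closed \<open>x \<in> C\<close>, of t] by simp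
  qed
  then show ?thesis
    using assms(4,5) by (blast intro: rtrancl_symcl_join)
qed

lemma wrel_map_arcs_iff:
  assumes "rooted n f" "\<forall>k<n. f k < n"
  shows "(x, y) \<in> wrel n (map_arcs n f) \<longleftrightarrow> x < n \<and> y < n \<and> root_of f x = root_of f y"
proof
  assume "(x, y) \<in> wrel n (map_arcs n f)"
  then have "(x, y) \<in> (map_arcs n f \<union> (map_arcs n f)\<inverse>)\<^sup>*" "x < n" "y < n"
    unfolding wrel_def by auto
  moreover have "root_of f b = root_of f a"
    if "(a, b) \<in> (map_arcs n f \<union> (map_arcs n f)\<inverse>)\<^sup>*" "a < n" for a b
    using that
  proof (induction rule: rtrancl_induct)
    case (step b c)
    then show ?case
      using root_of_step[OF assms] by (auto simp: mem_map_arcs)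
  qed simp
  ultimately show "x < n \<and> y < n \<and> root_of f x = root_of f y"
    by simp
next
  assume xy: "x < n \<and> y < n \<and> root_of f x = root_of f y"
  let ?C = "{z. z < n \<and> root_of f z = root_of f x}"
  have "(x, y) \<in> ((map_arcs n f \<inter> ?C \<times> ?C) \<union> (map_arcs n f \<inter> ?C \<times> ?C)\<inverse>)\<^sup>*"
    using xy by (intro root_class_connected[OF assms]) auto
  then have "(x, y) \<in> (map_arcs n f \<union> (map_arcs n f)\<inverse>)\<^sup>*"
    by (rule rtrancl_mono[THEN subsetD, rotated]) blast
  then show "(x, y) \<in> wrel n (map_arcs n f)"
    unfolding wrel_def using xy by blast
qed

lemma wrel_map_arcs_class:
  assumes "rooted n f" "\<forall>k<n. f k < n" "x < n"
  shows "wrel n (map_arcs n f) `` {x} = {y. y < n \<and> root_of f y = root_of f x}"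
  using wrel_map_arcs_iff[OF assms(1,2)] assms(3) by auto

lemma in_forest_map_arcs:
  assumes "rooted n f" "\<forall>k<n. f k < n" "\<forall>k<n. f k \<noteq> k \<longrightarrow> 0 < w k (f k)"
  shows "in_forest n w (map_arcs n f)"
  unfolding in_forest_def
proof safe
  fix a b
  assume "(a, b) \<in> map_arcs n f"
  then show "(a, b) \<in> arcs n w"
    using assms(2,3) unfolding arcs_def by (auto simp: mem_map_arcs)
next
  fix C
  assume "C \<in> {0..<n} // wrel n (map_arcs n f)"
  then obtain x where x: "x < n" and C_class: "C = wrel n (map_arcs n f) `` {x}"
    by (auto elim!: quotientE)
  define \<rho> where "\<rho> = root_of f x"
  have C: "C = {y. y < n \<and> root_of f y = \<rho>}"
    using wrel_map_arcs_class[OF assms(1,2) x] C_class \<rho>_def by simp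
  have \<rho>: "\<rho> < n" "f \<rho> = \<rho>"
    unfolding \<rho>_def using root_of_less[OF assms(1,2) x] root_of_fixpoint[OF assms(1,2) x] by simp_all
  then have "\<rho> \<in> C"
    unfolding C using root_of_self[of f \<rho>, OF \<rho>(2)] by simp
  define A where "A = map_arcs n f \<inter> C \<times> C"
  have "outdeg A v = 1" if "v \<in> C" "v \<noteq> \<rho>" for v
  proof -
    have "f v \<noteq> v"
    proof
      assume "f v = v"
      then have "root_of f v = v"
        by (rule root_of_self)
      then show False
        using that unfolding C by simp
    qed
    moreover have "f v \<in> C"
      using that root_of_step[OF assms(1,2)] assms(2) unfolding C by auto
    ultimately have "{u. (v, u) \<in> A} = {f v}"
      using that unfolding A_def C by (auto simp: mem_map_arcs)
    then show ?thesis
      unfolding outdeg_def by simp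
  qed
  moreover have "outdeg A \<rho> = 0"
    unfolding outdeg_def A_def using \<rho>(2) by (simp add: mem_map_arcs)
  moreover have "\<forall>a\<in>C. \<forall>b\<in>C. (a, b) \<in> (A \<union> A\<inverse>)\<^sup>*"
    unfolding A_def using root_class_connected[OF assms(1,2) C] by blast
  moreover have "A \<subseteq> C \<times> C" "C \<noteq> {}"
    unfolding A_def using \<open>\<rho> \<in> C\<close> by blast+
  ultimately show "converging_tree C (map_arcs n f \<inter> C \<times> C)"
    unfolding converging_tree_def A_def[symmetric] using \<open>\<rho> \<in> C\<close> by blast
qed

lemma num_trees_map_arcs:
  assumes "rooted n f" "\<forall>k<n. f k < n"
  shows "num_trees n (map_arcs n f) = card {k. k < n \<and> f k = k}"
proof -
  let ?R = "wrel n (map_arcs n f)"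
  let ?roots = "{k. k < n \<and> f k = k}"
  have root_class: "?R `` {x} = {y. y < n \<and> root_of f y = root_of f x}" if "x < n" for x
    using wrel_map_arcs_class[OF assms that] .
  have "{0..<n} // ?R = (\<lambda>r. ?R `` {r}) ` ?roots"
  proof
    show "{0..<n} // ?R \<subseteq> (\<lambda>r. ?R `` {r}) ` ?roots"
    proof
      fix C
      assume "C \<in> {0..<n} // ?R"
      then obtain x where x: "x < n" and C: "C = ?R `` {x}"
        by (auto elim!: quotientE)
      let ?r = "root_of f x"
      have r: "?r < n" "f ?r = ?r"
        using root_of_less[OF assms x] root_of_fixpoint[OF assms x] by simp_all
      then have "?R `` {?r} = C"
        using root_of_self[of f "root_of f x", OF r(2)] unfolding C root_class[OF x] root_class[OF r(1)] by simp
      then show "C \<in> (\<lambda>r. ?R `` {r}) ` ?roots"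
        using r by force
    qed
  qed (auto intro!: quotientI)
  moreover have "inj_on (\<lambda>r. ?R `` {r}) ?roots"
  proof
    fix r r'
    assume r: "r \<in> ?roots" "r' \<in> ?roots" and eq: "?R `` {r} = ?R `` {r'}"
    have "r < n" "r' < n"
      using r by simp_all
    have "r \<in> ?R `` {r}"
      unfolding root_class[OF \<open>r < n\<close>] using \<open>r < n\<close> by simp
    then have "root_of f r = root_of f r'"
      unfolding eq root_class[OF \<open>r' < n\<close>] by simp
    moreover have "root_of f r = r" "root_of f r' = r'"
      using r root_of_self[of f r] root_of_self[of f r'] by simp_all
    ultimately show "r = r'"
      by simp
  qed
  ultimately show ?thesis
    unfolding num_trees_def by (simp add: card_image)
qed

lemma map_arcs_eq_image: "map_arcs n f = (\<lambda>k. (k, f k)) ` {k. k < n \<and> f k \<noteq> k}"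
  unfolding map_arcs_def by auto

lemma card_map_arcs: "card (map_arcs n f) = card {k. k < n \<and> f k \<noteq> k}"
  unfolding map_arcs_eq_image by (rule card_image) (auto simp: inj_on_def)

lemma weight_map_arcs: "weight w (map_arcs n f) = (\<Prod>k | k < n \<and> f k \<noteq> k. w k (f k))"
  unfolding weight_def map_arcs_eq_image by (subst prod.reindex) (auto simp: inj_on_def)

lemma outdeg_map_arcs_eq_0: "j < n \<Longrightarrow> outdeg (map_arcs n f) j = 0 \<longleftrightarrow> f j = j"
  unfolding outdeg_def by (auto simp: mem_map_arcs)

lemma wrel_extend_arc:
  assumes "(x, v) \<in> wrel n F" "(v, u) \<in> F" "u < n"
  shows "(x, u) \<in> wrel n F"
  using assms unfolding wrel_def by (auto intro: rtrancl_into_rtrancl)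

lemma in_forest_arc:
  assumes "in_forest n w F" "(a, b) \<in> F"
  shows "a < n" "b < n" "0 < w a b"
  using assms unfolding in_forest_def arcs_def by auto

lemma in_forest_class_tree:
  assumes "in_forest n w F" "x < n"
  shows "converging_tree (wrel n F `` {x}) (F \<inter> (wrel n F `` {x}) \<times> (wrel n F `` {x}))"
proof -
  have "wrel n F `` {x} \<in> {0..<n} // wrel n F"
    using assms(2) by (intro quotientI) simp
  then show ?thesis
    using assms(1) unfolding in_forest_def by blast
qed

lemma in_forest_class_out_arcs:
  assumes "in_forest n w F" "v \<in> wrel n F `` {x}"
  shows "{u. (v, u) \<in> F \<inter> (wrel n F `` {x}) \<times> (wrel n F `` {x})} = {u. (v, u) \<in> F}"
  using assms wrel_extend_arc in_forest_arc(2) by blast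

lemma finite_out_arcs:
  assumes "in_forest n w F"
  shows "finite {u. (v, u) \<in> F}"
  by (rule finite_subset[of _ "{..<n}"]) (use in_forest_arc(2)[OF assms] in auto)

lemma in_forest_out_arc_unique:
  assumes F: "in_forest n w F" and "(v, u) \<in> F" "(v, u') \<in> F"
  shows "u = u'"
proof -
  have "v < n"
    using in_forest_arc(1)[OF F] assms(2) by blast
  let ?C = "wrel n F `` {v}"
  have "v \<in> ?C"
    using \<open>v < n\<close> unfolding wrel_def by auto
  obtain r where "r \<in> ?C" "outdeg (F \<inter> ?C \<times> ?C) r = 0"
    "\<forall>v'\<in>?C. v' \<noteq> r \<longrightarrow> outdeg (F \<inter> ?C \<times> ?C) v' = 1"
    using in_forest_class_tree[OF F \<open>v < n\<close>] unfolding converging_tree_def by blast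
  then have "outdeg (F \<inter> ?C \<times> ?C) v \<le> 1"
    using \<open>v \<in> ?C\<close> by (cases "v = r") auto
  then have "card {x. (v, x) \<in> F} \<le> 1"
    unfolding outdeg_def in_forest_class_out_arcs[OF F \<open>v \<in> ?C\<close>] .
  then show ?thesis
    using card_le_Suc0_iff_eq[OF finite_out_arcs[OF F]] assms(2,3) by auto
qed

lemma in_forest_exists_sink:
  assumes F: "in_forest n w F" and "x < n"
  shows "\<exists>r<n. (\<forall>u. (r, u) \<notin> F) \<and> (r, x) \<in> (F \<union> F\<inverse>)\<^sup>*"
proof -
  let ?C = "wrel n F `` {x}"
  have "x \<in> ?C"
    using \<open>x < n\<close> unfolding wrel_def by auto
  obtain r where r: "r \<in> ?C" "outdeg (F \<inter> ?C \<times> ?C) r = 0"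
    and conn: "\<forall>a\<in>?C. \<forall>b\<in>?C. (a, b) \<in> ((F \<inter> ?C \<times> ?C) \<union> (F \<inter> ?C \<times> ?C)\<inverse>)\<^sup>*"
    using in_forest_class_tree[OF F \<open>x < n\<close>] unfolding converging_tree_def by blast
  have "{u. (r, u) \<in> F} = {}"
    using r(2) finite_out_arcs[OF F, of r]
    unfolding outdeg_def in_forest_class_out_arcs[OF F r(1)] by simp
  moreover have "(r, x) \<in> (F \<union> F\<inverse>)\<^sup>*"
    using conn r(1) \<open>x \<in> ?C\<close> rtrancl_mono[of "(F \<inter> ?C \<times> ?C) \<union> (F \<inter> ?C \<times> ?C)\<inverse>" "F \<union> F\<inverse>"]
    by blast
  moreover have "r < n"
    using r(1) unfolding wrel_def by auto
  ultimately show ?thesis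
    by blast
qed

lemma graph_rtrancl_funpow:
  assumes "\<forall>(a, b)\<in>A. b = g a" "g r = r" "(r, b) \<in> (A \<union> A\<inverse>)\<^sup>*"
  shows "\<exists>t. (g^^t) b = r"
  using assms(3)
proof (induction rule: rtrancl_induct)
  case base
  have "(g^^0) r = r"
    by simp
  then show ?case
    by (rule exI)
next
  case (step b c)
  then obtain t where t: "(g^^t) b = r"
    by blast
  show ?case
  proof (cases "(b, c) \<in> A")
    case True
    then have c: "c = g b"
      using assms(1) by blast
    show ?thesis
    proof (cases t)
      case 0
      then have "(g^^0) c = r"
        using t c assms(2) by simp
      then show ?thesis
        by (rule exI)
    next
      case (Suc s)
      then have "(g^^s) c = r"
        using t c by (simp add: funpow_Suc_right del: funpow.simps)
      then show ?thesis
        by (rule exI)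
    qed
  next
    case False
    then have "b = g c"
      using step.hyps(2) assms(1) by blast
    then have "(g^^Suc t) c = r"
      using t by (simp add: funpow_Suc_right del: funpow.simps)
    then show ?thesis
      by (rule exI)
  qed
qed

lemma in_forest_obtain_map:
  assumes F: "in_forest n w F" and loops: "\<forall>k<n. w k k = 0"
  obtains f where "f \<in> {0..<n} \<rightarrow>\<^sub>E {0..<n}" "rooted n f" "map_arcs n f = F"
proof
  define f where "f k = (if k < n then if \<exists>u. (k, u) \<in> F then THE u. (k, u) \<in> F else k else undefined)"
    for k
  have f_arc: "f k = u" if "(k, u) \<in> F" for k u
    using that in_forest_out_arc_unique[OF F] in_forest_arc(1)[OF F that]
    unfolding f_def by (auto intro: the_equality)
  have f_no_arc: "f k = k" if "k < n" "\<forall>u. (k, u) \<notin> F" for k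
    using that unfolding f_def by auto
  have no_loop: "k \<noteq> u" if "(k, u) \<in> F" for k u
    using in_forest_arc[OF F that] loops by auto
  show "f \<in> {0..<n} \<rightarrow>\<^sub>E {0..<n}"
  proof (rule PiE_I)
    fix k
    assume "k \<in> {0..<n}"
    then show "f k \<in> {0..<n}"
      using f_arc f_no_arc in_forest_arc(2)[OF F] by (cases "\<exists>u. (k, u) \<in> F") auto
  qed (simp add: f_def)
  show "map_arcs n f = F"
  proof safe
    fix k u
    assume "(k, u) \<in> map_arcs n f"
    then have "k < n" "f k \<noteq> k" "u = f k"
      by (simp_all add: mem_map_arcs)
    then obtain u' where "(k, u') \<in> F"
      using f_no_arc by blast
    then show "(k, u) \<in> F"
      using f_arc \<open>u = f k\<close> by simp
  next
    fix k u
    assume ku: "(k, u) \<in> F"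
    then show "(k, u) \<in> map_arcs n f"
      using f_arc[OF ku] no_loop[OF ku] in_forest_arc(1)[OF F ku] by (auto simp: mem_map_arcs)
  qed
  show "rooted n f"
    unfolding rooted_def
  proof (intro allI impI)
    fix x
    assume "x < n"
    then obtain r where r: "r < n" "\<forall>u. (r, u) \<notin> F" "(r, x) \<in> (F \<union> F\<inverse>)\<^sup>*"
      using in_forest_exists_sink[OF F] by blast
    have "f r = r"
      using f_no_arc r(1,2) by blast
    have "\<forall>(a, b)\<in>F. b = f a"
      using f_arc by auto
    from graph_rtrancl_funpow[OF this \<open>f r = r\<close> r(3)]
    obtain t where "(f^^t) x = r"
      by blast
    then show "\<exists>r. reaches f x r"
      unfolding reaches_def using \<open>f r = r\<close> by blast
  qed
qed

definition forest_maps :: "nat \<Rightarrow> (nat \<Rightarrow> nat \<Rightarrow> real) \<Rightarrow> (nat \<Rightarrow> nat) set" where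
  "forest_maps n w = {f \<in> {0..<n} \<rightarrow>\<^sub>E {0..<n}. rooted n f \<and> (\<forall>k<n. f k \<noteq> k \<longrightarrow> 0 < w k (f k))}"

lemma inj_on_map_arcs: "inj_on (map_arcs n) ({0..<n} \<rightarrow>\<^sub>E A)"
proof
  fix f g
  assume f: "f \<in> {0..<n} \<rightarrow>\<^sub>E A" and g: "g \<in> {0..<n} \<rightarrow>\<^sub>E A" and eq: "map_arcs n f = map_arcs n g"
  show "f = g"
  proof (rule PiE_ext[OF f g])
    fix k
    assume "k \<in> {0..<n}"
    then have "(k, f k) \<in> map_arcs n f \<longleftrightarrow> f k \<noteq> k" "(k, g k) \<in> map_arcs n g \<longleftrightarrow> g k \<noteq> k"
      by (simp_all add: mem_map_arcs)
    then show "f k = g k"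
      using eq by (metis mem_map_arcs)
  qed
qed

lemma bij_betw_map_arcs_forest_maps:
  assumes "\<forall>k<n. w k k = 0"
  shows "bij_betw (map_arcs n) (forest_maps n w) {F. in_forest n w F}"
proof (rule bij_betw_imageI)
  show "inj_on (map_arcs n) (forest_maps n w)"
    unfolding forest_maps_def by (rule inj_on_subset[OF inj_on_map_arcs]) blast
  show "map_arcs n ` forest_maps n w = {F. in_forest n w F}"
  proof safe
    fix f
    assume "f \<in> forest_maps n w"
    then show "in_forest n w (map_arcs n f)"
      unfolding forest_maps_def by (intro in_forest_map_arcs) (auto simp: PiE_iff)
  next
    fix F
    assume F: "in_forest n w F"
    then obtain f where f: "f \<in> {0..<n} \<rightarrow>\<^sub>E {0..<n}" "rooted n f" "map_arcs n f = F"
      using in_forest_obtain_map assms by blast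
    have "0 < w k (f k)" if "k < n" "f k \<noteq> k" for k
    proof -
      have "(k, f k) \<in> F"
        using that unfolding f(3)[symmetric] by (simp add: mem_map_arcs)
      then show ?thesis
        by (rule in_forest_arc(3)[OF F])
    qed
    then have "f \<in> forest_maps n w"
      unfolding forest_maps_def using f(1,2) by blast
    then show "F \<in> map_arcs n ` forest_maps n w"
      using f(3) by blast
  qed
qed

section \<open>Cofactors of the shifted Laplacian\<close>

lemma shifted_laplacian_entry:
  fixes lam :: "'a::{real_algebra_1, idom}"
  assumes "k < n" "c < n"
  shows "(lam \<cdot>\<^sub>m 1\<^sub>m n + map_mat of_real (laplacian n w)) $$ (k, c) =
    (\<Sum>m<n. (if m = k then lam else of_real (w k m)) * (of_bool (c = k) - of_bool (m \<noteq> k \<and> c = m)))"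
proof -
  have "(\<Sum>m<n. (if m = k then lam else of_real (w k m)) * (of_bool (c = k) - of_bool (m \<noteq> k \<and> c = m))) =
      lam * of_bool (c = k) + (\<Sum>m\<in>{0..<n} - {k}. of_real (w k m) * (of_bool (c = k) - of_bool (c = m)))"
    using assms(1) by (simp add: lessThan_atLeast0 sum.remove[of _ k] cong: sum.cong_simp)
  also have "(\<Sum>m\<in>{0..<n} - {k}. of_real (w k m) * (of_bool (c = k) - of_bool (c = m))) =
      (if c = k then (\<Sum>m\<in>{0..<n} - {k}. of_real (w k m)) else - of_real (w k c))"
  proof (cases "c = k")
    case False
    then have "(\<Sum>m\<in>{0..<n} - {k}. of_real (w k m) * (of_bool (c = k) - of_bool (c = m))) =
        (\<Sum>m\<in>{0..<n} - {k}. - (if m = c then of_real (w k m) else 0 :: 'a))"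
      by (intro sum.cong) auto
    then show ?thesis
      using False assms(2) by (simp add: sum_negf)
  qed simp
  finally show ?thesis
    using assms by (auto simp: laplacian_def of_real_sum)
qed

lemma cofactor_shifted_laplacian_expansion:
  fixes lam :: "'a::{real_algebra_1, idom}"
  assumes "i < n" "j < n"
  shows "cofactor (lam \<cdot>\<^sub>m 1\<^sub>m n + map_mat of_real (laplacian n w)) j i =
    (\<Sum>f | f \<in> {0..<n} \<rightarrow>\<^sub>E {0..<n} \<and> f j = j \<and> rooted n f \<and> root_of f i = j.
       \<Prod>k\<in>{0..<n} - {j}. if f k = k then lam else of_real (w k (f k)))"
proof -
  let ?M = "lam \<cdot>\<^sub>m 1\<^sub>m n + map_mat of_real (laplacian n w)"
  let ?maps = "{0..<n} \<rightarrow>\<^sub>E {0..<n}"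
  (* Row k \<noteq> j is the sum over m of a k m * v k m; choosing m = f k in every row gives
     pointer_mat n f j i. *)
  define a where "a k m = (if k = j then of_bool (m = j) else if m = k then lam else of_real (w k m))"
    for k m
  define v :: "nat \<Rightarrow> nat \<Rightarrow> nat \<Rightarrow> 'a"
    where "v k m c = (if k = j then of_bool (c = i) else of_bool (c = k) - of_bool (m \<noteq> k \<and> c = m))"
    for k m c
  have rows: "mat n n (\<lambda>(k, c). if k = j then of_bool (c = i) else ?M $$ (k, c)) =
      mat n n (\<lambda>(k, c). \<Sum>m\<in>{0..<n}. a k m * v k m c)"
  proof (rule eq_matI)
    fix k c
    assume "k < dim_row (mat n n (\<lambda>(k, c). \<Sum>m\<in>{0..<n}. a k m * v k m c))"
      "c < dim_col (mat n n (\<lambda>(k, c). \<Sum>m\<in>{0..<n}. a k m * v k m c))"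
    then have "k < n" "c < n"
      by simp_all
    then show "mat n n (\<lambda>(k, c). if k = j then of_bool (c = i) else ?M $$ (k, c)) $$ (k, c) =
        mat n n (\<lambda>(k, c). \<Sum>m\<in>{0..<n}. a k m * v k m c) $$ (k, c)"
      using assms(2) by (cases "k = j") (simp_all add: a_def v_def shifted_laplacian_entry lessThan_atLeast0)
  qed simp_all
  have pointer: "mat n n (\<lambda>(k, c). v k (f k) c) = pointer_mat n f j i" for f
    unfolding pointer_mat_def v_def by simp
  have "?M \<in> carrier_mat n n"
    by (simp add: laplacian_def)
  then have "cofactor ?M j i = det (mat n n (\<lambda>(k, c). if k = j then of_bool (c = i) else ?M $$ (k, c)))"
    using assms by (rule cofactor_eq_det_replace_row)
  also have "\<dots> = det (mat n n (\<lambda>(k, c). \<Sum>m\<in>{0..<n}. a k m * v k m c))"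
    by (simp only: rows)
  also have "\<dots> = (\<Sum>f\<in>?maps. (\<Prod>k<n. a k (f k)) * det (pointer_mat n f j i))"
    unfolding det_mat_sum_rows[OF finite_atLeastLessThan] pointer ..
  also have "\<dots> = (\<Sum>f\<in>?maps. if f j = j \<and> rooted n f \<and> root_of f i = j then \<Prod>k<n. a k (f k) else 0)"
  proof (rule sum.cong[OF refl])
    fix f
    assume f: "f \<in> ?maps"
    show "(\<Prod>k<n. a k (f k)) * det (pointer_mat n f j i) =
        (if f j = j \<and> rooted n f \<and> root_of f i = j then \<Prod>k<n. a k (f k) else 0)"
    proof (cases "f j = j")
      case True
      have "\<forall>k<n. f k < n"
        using f by (auto simp: PiE_iff)
      then have "det (pointer_mat n f j i :: 'a mat) = of_bool (rooted n f \<and> root_of f i = j)"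
        using det_pointer_mat True assms by blast
      then show ?thesis
        using True by simp
    next
      case False
      then have "(\<Prod>k<n. a k (f k)) = 0"
        using assms(2) by (intro prod_zero bexI[of _ j]) (simp_all add: a_def)
      then show ?thesis
        using False by simp
    qed
  qed
  also have "\<dots> = (\<Sum>f | f \<in> ?maps \<and> f j = j \<and> rooted n f \<and> root_of f i = j. \<Prod>k<n. a k (f k))"
    by (simp add: sum.inter_filter finite_PiE)
  also have "\<dots> = (\<Sum>f | f \<in> ?maps \<and> f j = j \<and> rooted n f \<and> root_of f i = j.
       \<Prod>k\<in>{0..<n} - {j}. if f k = k then lam else of_real (w k (f k)))"
  proof (rule sum.cong[OF refl])
    fix f
    assume "f \<in> {f. f \<in> ?maps \<and> f j = j \<and> rooted n f \<and> root_of f i = j}"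
    then have "f j = j"
      by simp
    have "(\<Prod>k<n. a k (f k)) = a j (f j) * (\<Prod>k\<in>{0..<n} - {j}. a k (f k))"
      using assms(2) by (simp add: lessThan_atLeast0 prod.remove)
    also have "\<dots> = (\<Prod>k\<in>{0..<n} - {j}. if f k = k then lam else of_real (w k (f k)))"
      using \<open>f j = j\<close> by (simp add: a_def)
    finally show "(\<Prod>k<n. a k (f k)) =
        (\<Prod>k\<in>{0..<n} - {j}. if f k = k then lam else of_real (w k (f k)))" .
  qed
  finally show ?thesis .
qed

lemma prod_forest_map_coeff:
  fixes lam :: "'a::{real_algebra_1, idom}"
  assumes "f j = j" "j < n"
  shows "(\<Prod>k\<in>{0..<n} - {j}. if f k = k then lam else of_real (w k (f k))) =
    of_real (weight w (map_arcs n f)) * lam ^ (n - card (map_arcs n f) - 1)"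
proof -
  let ?g = "\<lambda>k. if f k = k then lam else of_real (w k (f k))"
  let ?moved = "{k. k < n \<and> f k \<noteq> k}" and ?fixed = "{k. k < n \<and> f k = k}"
  have "card (?moved \<union> ?fixed) = card ?moved + card ?fixed"
    by (rule card_Un_disjoint) auto
  moreover have "?moved \<union> ?fixed = {..<n}"
    by auto
  ultimately have "card ?fixed - 1 = n - card (map_arcs n f) - 1"
    by (simp add: card_map_arcs)
  have "j \<in> ?fixed"
    using assms(2) by (simp add: assms(1))
  have split: "{0..<n} - {j} = ?moved \<union> (?fixed - {j})"
    using assms(1) by auto
  have "prod ?g ({0..<n} - {j}) = prod ?g ?moved * prod ?g (?fixed - {j})"
    unfolding split by (rule prod.union_disjoint) auto
  also have "prod ?g ?moved = of_real (weight w (map_arcs n f))"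
    unfolding weight_map_arcs of_real_prod by (rule prod.cong) auto
  also have "prod ?g (?fixed - {j}) = lam ^ (card ?fixed - 1)"
    using \<open>j \<in> ?fixed\<close> by simp
  finally show ?thesis
    unfolding \<open>card ?fixed - 1 = _\<close> .
qed

lemma cofactor_shifted_laplacian_forests:
  fixes lam :: "'a::{real_algebra_1, idom}"
  assumes loops: "\<forall>k<n. w k k = 0" and nonneg: "\<And>a b. a < n \<Longrightarrow> b < n \<Longrightarrow> 0 \<le> w a b"
    and "i < n" "j < n"
  shows "cofactor (lam \<cdot>\<^sub>m 1\<^sub>m n + map_mat of_real (laplacian n w)) j i =
    (\<Sum>F | in_forest n w F \<and> (i, j) \<in> wrel n F \<and> outdeg F j = 0.
       of_real (weight w F) * lam ^ (n - card F - 1))"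
proof -
  let ?c = "\<lambda>f. \<Prod>k\<in>{0..<n} - {j}. if f k = k then lam else of_real (w k (f k))"
  let ?maps = "{f. f \<in> {0..<n} \<rightarrow>\<^sub>E {0..<n} \<and> f j = j \<and> rooted n f \<and> root_of f i = j}"
  let ?fmaps = "{f \<in> forest_maps n w. f j = j \<and> root_of f i = j}"
  have "cofactor (lam \<cdot>\<^sub>m 1\<^sub>m n + map_mat of_real (laplacian n w)) j i = sum ?c ?maps"
    using assms(3,4) by (rule cofactor_shifted_laplacian_expansion)
  also have "\<dots> = sum ?c ?fmaps"
  proof (rule sum.mono_neutral_right)
    show "finite ?maps"
      by (rule finite_subset[of _ "{0..<n} \<rightarrow>\<^sub>E {0..<n}"]) (auto simp: finite_PiE)
    show "?fmaps \<subseteq> ?maps"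
      unfolding forest_maps_def by blast
    show "\<forall>f\<in>?maps - ?fmaps. ?c f = 0"
    proof
      fix f
      assume f: "f \<in> ?maps - ?fmaps"
      then obtain k where k: "k < n" "f k \<noteq> k" "\<not> 0 < w k (f k)"
        unfolding forest_maps_def by blast
      have "f k < n" "k \<noteq> j"
        using f k(1,2) by (auto simp: PiE_iff)
      then have "w k (f k) = 0"
        using nonneg[OF k(1)] k(3) by force
      then show "?c f = 0"
        using k \<open>k \<noteq> j\<close> by (intro prod_zero bexI[of _ k]) simp_all
    qed
  qed
  also have "\<dots> = (\<Sum>f\<in>?fmaps. of_real (weight w (map_arcs n f)) * lam ^ (n - card (map_arcs n f) - 1))"
    using assms(4) by (intro sum.cong) (simp_all add: prod_forest_map_coeff)
  also have "\<dots> = (\<Sum>F | in_forest n w F \<and> (i, j) \<in> wrel n F \<and> outdeg F j = 0.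
       of_real (weight w F) * lam ^ (n - card F - 1))"
  proof (rule sum.reindex_bij_betw)
    have "((i, j) \<in> wrel n (map_arcs n f) \<and> outdeg (map_arcs n f) j = 0) \<longleftrightarrow> f j = j \<and> root_of f i = j"
      if "f \<in> forest_maps n w" for f
    proof -
      have "rooted n f" "\<forall>k<n. f k < n"
        using that unfolding forest_maps_def by (auto simp: PiE_iff)
      then show ?thesis
        using wrel_map_arcs_iff outdeg_map_arcs_eq_0 root_of_self[of f j] assms(3,4) by auto
    qed
    then show "bij_betw (map_arcs n) ?fmaps {F. in_forest n w F \<and> (i, j) \<in> wrel n F \<and> outdeg F j = 0}"
      using bij_betw_Collect[OF bij_betw_map_arcs_forest_maps[of n w, OF loops]] by simp
  qed
  finally show ?thesis .
qed

lemma finite_in_forests: "finite {F. in_forest n w F}"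
proof (rule finite_subset)
  show "{F. in_forest n w F} \<subseteq> Pow ({..<n} \<times> {..<n})"
    unfolding in_forest_def arcs_def by auto
qed simp

lemma in_forest_dim_le_num_trees: "in_forest n w F \<Longrightarrow> in_forest_dim n w \<le> num_trees n F"
  unfolding in_forest_dim_def
  by (rule Min_le) (auto simp: finite_in_forests Setcompr_eq_image)

lemma card_add_num_trees:
  assumes "in_forest n w F" "\<forall>k<n. w k k = 0"
  shows "card F + num_trees n F = n"
proof -
  obtain f where f: "f \<in> {0..<n} \<rightarrow>\<^sub>E {0..<n}" "rooted n f" "map_arcs n f = F"
    using in_forest_obtain_map[OF assms] .
  have closed: "\<forall>k<n. f k < n"
    using f(1) by (auto simp: PiE_iff)
  have "card ({k. k < n \<and> f k \<noteq> k} \<union> {k. k < n \<and> f k = k}) =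
      card {k. k < n \<and> f k \<noteq> k} + card {k. k < n \<and> f k = k}"
    by (rule card_Un_disjoint) auto
  moreover have "{k. k < n \<and> f k \<noteq> k} \<union> {k. k < n \<and> f k = k} = {..<n}"
    by auto
  ultimately show ?thesis
    unfolding f(3)[symmetric] card_map_arcs num_trees_map_arcs[OF f(2) closed] by simp
qed

lemma card_in_forest_le:
  assumes "in_forest n w F" "\<forall>k<n. w k k = 0"
  shows "card F \<le> n - in_forest_dim n w"
  using card_add_num_trees[OF assms] in_forest_dim_le_num_trees[OF assms(1)] by simp

lemma sum_Qent_powers:
  fixes lam :: "'a::{real_algebra_1, idom}"
  assumes "\<forall>k<n. w k k = 0"
  shows "(\<Sum>k = 0..n - in_forest_dim n w. of_real (Qent n w k i j) * lam ^ (n - k - 1)) =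
    (\<Sum>F | in_forest n w F \<and> (i, j) \<in> wrel n F \<and> outdeg F j = 0.
       of_real (weight w F) * lam ^ (n - card F - 1))"
proof -
  let ?T = "{F. in_forest n w F \<and> (i, j) \<in> wrel n F \<and> outdeg F j = 0}"
  let ?term = "\<lambda>F. of_real (weight w F) * lam ^ (n - card F - 1)"
  have "of_real (Qent n w k i j) * lam ^ (n - k - 1) = sum ?term {F \<in> ?T. card F = k}" for k
  proof -
    have "{F. in_forest n w F \<and> card F = k \<and> (i, j) \<in> wrel n F \<and> outdeg F j = 0} = {F \<in> ?T. card F = k}"
      by auto
    then show ?thesis
      unfolding Qent_def of_real_sum sum_distrib_right by (intro sum.cong) auto
  qed
  then have "(\<Sum>k = 0..n - in_forest_dim n w. of_real (Qent n w k i j) * lam ^ (n - k - 1)) =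
      (\<Sum>k = 0..n - in_forest_dim n w. sum ?term {F \<in> ?T. card F = k})"
    by simp
  also have "\<dots> = sum ?term ?T"
  proof (rule sum.group)
    show "finite ?T"
      by (rule finite_subset[OF _ finite_in_forests]) blast
    show "card ` ?T \<subseteq> {0..n - in_forest_dim n w}"
      using card_in_forest_le[of n w _, OF _ assms] by auto
  qed simp
  finally show ?thesis .
qed

theorem proposition3:
  fixes n :: nat and w :: "nat \<Rightarrow> nat \<Rightarrow> real" and lam :: complex
  assumes "n > 1"
    and "\<And>i. i < n \<Longrightarrow> w i i = 0"
    and "\<And>i j. i < n \<Longrightarrow> j < n \<Longrightarrow> w i j \<ge> 0"
  shows "adj_mat (lam \<cdot>\<^sub>m 1\<^sub>m n + map_mat of_real (laplacian n w)) =
    mat n n (\<lambda>(i,j). \<Sum>k = 0..n - in_forest_dim n w.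
       of_real (Qmat n w k $$ (i,j)) * lam ^ (n - k - 1))"
proof -
  let ?M = "lam \<cdot>\<^sub>m 1\<^sub>m n + map_mat of_real (laplacian n w)"
  have loops: "\<forall>k<n. w k k = 0"
    using assms(2) by blast
  have M: "?M \<in> carrier_mat n n"
    by (simp add: laplacian_def)
  show ?thesis
  proof (rule eq_matI)
    fix i j
    assume "i < dim_row (mat n n (\<lambda>(i,j). \<Sum>k = 0..n - in_forest_dim n w.
       of_real (Qmat n w k $$ (i,j)) * lam ^ (n - k - 1)))"
      "j < dim_col (mat n n (\<lambda>(i,j). \<Sum>k = 0..n - in_forest_dim n w.
       of_real (Qmat n w k $$ (i,j)) * lam ^ (n - k - 1)))"
    then have ij: "i < n" "j < n"
      by simp_all
    have "adj_mat ?M $$ (i, j) = cofactor ?M j i"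
      using M ij unfolding adj_mat_def by (simp add: laplacian_def)
    also have "\<dots> = (\<Sum>k = 0..n - in_forest_dim n w. of_real (Qent n w k i j) * lam ^ (n - k - 1))"
      unfolding sum_Qent_powers[of n w, OF loops] using cofactor_shifted_laplacian_forests[of n w, OF loops assms(3) ij] .
    finally show "adj_mat ?M $$ (i, j) = mat n n (\<lambda>(i,j). \<Sum>k = 0..n - in_forest_dim n w.
       of_real (Qmat n w k $$ (i,j)) * lam ^ (n - k - 1)) $$ (i, j)"
      using ij by (simp add: Qmat_def)
  qed (simp_all add: adj_mat_def laplacian_def)
qed

end
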